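(* Let $(u_n)_{n \geq 1}$ be a sequence of unitary matrices such that $u_n \in V(n)$ for all $n \geq 1$. Then $(u_n)_{n\ge1}$ is a virtual rotation in the sense of Neretin if and only if it is a virtual isometry.
   Context: $V(n)$ denotes the set of $n\times n$ unitary matrices which do not have $1$ as an eigenvalue. For $n\ge m\ge1$ and $u\in V(n)$ written in blocks $u=\begin{pmatrix}A&B\\C&D\end{pmatrix}$ of sizes $m\times m$, $m\times(n-m)$, $(n-m)\times m$, $(n-m)\times(n-m)$, $1-D$ is invertible and one sets $\tilde\pi_{n,m}(u) := A + B(1-D)^{-1}C\in V(m)$. A virtual rotation in the sense of Neretin is a sequence $(u_n)_{n\ge1}$ with $u_n\in V(n)$ and $u_m=\tilde\pi_{n,m}(u_n)$ for all $n\ge m\ge1$. Let $(e_k)$ be the canonical basis of $\ell^2$; identify $\mathbb{C}^n$ with the span of $e_1,\dots,e_n$ and $U(n)$ with the unitary operators fixing every $e_k$, $k>n$. For $n\ge m\ge1$ and $u\in U(n)$, $\pi_{n,m}(u)$ is the unique $v\in U(m)$ such that the range of $u-v$ is contained in $(u-\mathrm{Id})(\mathrm{span}\{e_k:k>m\})$ (existence and uniqueness are known). A virtual isometry is a sequence $(u_n)_{n\ge1}$ with $u_n\in U(n)$ and $\pi_{n+1,n}(u_{n+1})=u_n$ for all $n\ge1$. *)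

theory Defs
  imports "Jordan_Normal_Form.Char_Poly"
begin

(* Matrices are JNF matrices; an n x n matrix acts on C^n with 0-based
   indices, index i corresponding to the basis vector e_(i+1). *)

definition adj_mat :: "complex mat \<Rightarrow> complex mat" where
  "adj_mat u = mat (dim_col u) (dim_row u) (\<lambda>(i,j). cnj (u $$ (j,i)))"

definition U :: "nat \<Rightarrow> complex mat set" where
  "U n = {u. u \<in> carrier_mat n n \<and> u * adj_mat u = 1\<^sub>m n \<and> adj_mat u * u = 1\<^sub>m n}"

definition V :: "nat \<Rightarrow> complex mat set" where
  "V n = {u. u \<in> U n \<and> \<not> eigenvalue u 1}"

definition inv_mat :: "nat \<Rightarrow> complex mat \<Rightarrow> complex mat" where
  "inv_mat k M = (THE E. E \<in> carrier_mat k k \<and> E * M = 1\<^sub>m k \<and> M * E = 1\<^sub>m k)"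

definition pi_tilde :: "nat \<Rightarrow> nat \<Rightarrow> complex mat \<Rightarrow> complex mat" where
  "pi_tilde n m u = (case split_block u m m of (A, B, C, D) \<Rightarrow>
      A + B * inv_mat (n - m) (1\<^sub>m (n - m) - D) * C)"

definition virtual_rotation :: "(nat \<Rightarrow> complex mat) \<Rightarrow> bool" where
  "virtual_rotation u \<longleftrightarrow> (\<forall>n\<ge>1. u n \<in> V n) \<and>
     (\<forall>n m. 1 \<le> m \<longrightarrow> m \<le> n \<longrightarrow> u m = pi_tilde n m (u n))"

definition embed_mat :: "nat \<Rightarrow> nat \<Rightarrow> complex mat \<Rightarrow> complex mat" where
  "embed_mat n m v = four_block_mat v (0\<^sub>m m (n - m)) (0\<^sub>m (n - m) m) (1\<^sub>m (n - m))"

(* range of (u - v) contained in (u - Id)(span{e_k : k > m}); both sides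
   live in C^n since u - Id and u - v vanish on e_k, k > n *)
definition pi_cond :: "nat \<Rightarrow> nat \<Rightarrow> complex mat \<Rightarrow> complex mat \<Rightarrow> bool" where
  "pi_cond n m u v \<longleftrightarrow> (\<forall>x \<in> carrier_vec n. \<exists>y \<in> carrier_vec n.
      (\<forall>k<m. y $ k = 0) \<and> (u - embed_mat n m v) *\<^sub>v x = (u - 1\<^sub>m n) *\<^sub>v y)"

definition pi_proj :: "nat \<Rightarrow> nat \<Rightarrow> complex mat \<Rightarrow> complex mat" where
  "pi_proj n m u = (THE v. v \<in> U m \<and> pi_cond n m u v)"

definition virtual_isometry :: "(nat \<Rightarrow> complex mat) \<Rightarrow> bool" where
  "virtual_isometry u \<longleftrightarrow> (\<forall>n\<ge>1. u n \<in> U n) \<and>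
     (\<forall>n\<ge>1. pi_proj (Suc n) n (u (Suc n)) = u n)"

end

theory Submission
  imports Defs
begin

(* Let u \<in> V(n) have blocks A, B, C, D, so that 1 - D is invertible (a fixed vector of D would
   give a fixed vector of u), and let P = A + B (1 - D)^-1 C = pi_tilde(u).  For x in C^m the
   vector x @ (1 - D)^-1 C x is mapped by u to P x @ (1 - D)^-1 C x.  This identity shows that P
   is an isometry and that u - (P @ 1) maps C^n into (u - 1)(0 @ C^(n-m)), i.e. P satisfies the
   range condition defining pi(u).  No other matrix does: if u sends 0 @ z to w @ z then w = 0
   since u is an isometry, and then z = 0 since 1 is not an eigenvalue of u.  The range condition is transitive along n \<ge> k \<ge> m, so the consecutive
   compatibilities of a virtual isometry imply all compatibilities of a virtual rotation. *)

lemma adj_mat_carrier [simp]: "A \<in> carrier_mat n m \<Longrightarrow> adj_mat A \<in> carrier_mat m n"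
  unfolding adj_mat_def by auto

lemma dim_adj_mat [simp]: "dim_row (adj_mat A) = dim_col A" "dim_col (adj_mat A) = dim_row A"
  unfolding adj_mat_def by auto

lemma index_adj_mat [simp]:
  "i < dim_col A \<Longrightarrow> j < dim_row A \<Longrightarrow> adj_mat A $$ (i, j) = cnj (A $$ (j, i))"
  unfolding adj_mat_def by auto

lemma cscalar_prod_adj_mat:
  assumes A: "A \<in> carrier_mat n m" and x: "x \<in> carrier_vec m" and z: "z \<in> carrier_vec n"
  shows "(A *\<^sub>v x) \<bullet>c z = x \<bullet>c (adj_mat A *\<^sub>v z)"
proof -
  have "(A *\<^sub>v x) \<bullet>c z = (\<Sum>i<n. \<Sum>j<m. A $$ (i, j) * x $ j * cnj (z $ i))"
    using A x z by (simp add: scalar_prod_def row_def lessThan_atLeast0 sum_distrib_right)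
  also have "\<dots> = (\<Sum>j<m. \<Sum>i<n. A $$ (i, j) * x $ j * cnj (z $ i))"
    by (rule sum.swap)
  also have "\<dots> = x \<bullet>c (adj_mat A *\<^sub>v z)"
    using A x z by (simp add: scalar_prod_def row_def lessThan_atLeast0 sum_distrib_left mult_ac)
  finally show ?thesis .
qed

lemma U_carrier: "u \<in> U n \<Longrightarrow> u \<in> carrier_mat n n"
  unfolding U_def by simp

lemma U_cscalar_prod:
  assumes u: "u \<in> U n" and x: "x \<in> carrier_vec n" and y: "y \<in> carrier_vec n"
  shows "(u *\<^sub>v x) \<bullet>c (u *\<^sub>v y) = x \<bullet>c y"
proof -
  have uc: "u \<in> carrier_mat n n" and uu: "adj_mat u * u = 1\<^sub>m n"
    using u unfolding U_def by auto
  have "(u *\<^sub>v x) \<bullet>c (u *\<^sub>v y) = x \<bullet>c (adj_mat u *\<^sub>v (u *\<^sub>v y))"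
    using uc x y by (simp add: cscalar_prod_adj_mat)
  also have "adj_mat u *\<^sub>v (u *\<^sub>v y) = y"
    using uc y uu assoc_mult_mat_vec[of "adj_mat u" n n u n y] by simp
  finally show ?thesis .
qed

lemma cscalar_prod_preserving_in_U:
  assumes M: "M \<in> carrier_mat n n"
    and iso: "\<And>x y. x \<in> carrier_vec n \<Longrightarrow> y \<in> carrier_vec n \<Longrightarrow> (M *\<^sub>v x) \<bullet>c (M *\<^sub>v y) = x \<bullet>c y"
  shows "M \<in> U n"
proof -
  have col: "M *\<^sub>v unit_vec n j = col M j" if "j < n" for j
    using M that by (intro eq_vecI) (auto simp: row_def)
  have conj_unit: "conjugate (unit_vec n i) = (unit_vec n i :: complex vec)" for i
    by (intro eq_vecI) (auto simp: unit_vec_def)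
  have "adj_mat M * M = 1\<^sub>m n"
  proof (rule eq_matI)
    fix i j assume "i < dim_row (1\<^sub>m n :: complex mat)" "j < dim_col (1\<^sub>m n :: complex mat)"
    hence i: "i < n" and j: "j < n" by auto
    have "(adj_mat M * M) $$ (i, j) = col M j \<bullet>c col M i"
      using M i j by (simp add: scalar_prod_def lessThan_atLeast0 mult_ac)
    also have "\<dots> = unit_vec n j \<bullet>c unit_vec n i"
      using iso[of "unit_vec n j" "unit_vec n i"] col i j by simp
    also have "\<dots> = 1\<^sub>m n $$ (i, j)"
      using i j by (simp add: conj_unit)
    finally show "(adj_mat M * M) $$ (i, j) = 1\<^sub>m n $$ (i, j)" .
  qed (use M in auto)
  moreover have "M * adj_mat M = 1\<^sub>m n"
    using mat_mult_left_right_inverse[OF adj_mat_carrier[OF M] M] calculation .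
  ultimately show ?thesis
    unfolding U_def using M by auto
qed

lemma cscalar_prod_append:
  fixes a c :: "complex vec"
  assumes "a \<in> carrier_vec n1" "b \<in> carrier_vec n2" "c \<in> carrier_vec n1" "d \<in> carrier_vec n2"
  shows "(a @\<^sub>v b) \<bullet>c (c @\<^sub>v d) = a \<bullet>c c + b \<bullet>c d"
proof -
  have "conjugate (c @\<^sub>v d) = conjugate c @\<^sub>v conjugate d"
    by (intro eq_vecI) (auto simp: append_vec_def Let_def)
  thus ?thesis
    using assms by (simp add: scalar_prod_append)
qed

lemma mat_eq_by_mult_vec:
  fixes M N :: "complex mat"
  assumes M: "M \<in> carrier_mat r c" and N: "N \<in> carrier_mat r c"
    and eq: "\<And>x. x \<in> carrier_vec c \<Longrightarrow> M *\<^sub>v x = N *\<^sub>v x"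
  shows "M = N"
proof (rule eq_matI)
  fix i j assume i: "i < dim_row N" and j: "j < dim_col N"
  have "M $$ (i, j) = (M *\<^sub>v unit_vec c j) $ i" using M N i j by (simp add: row_def)
  also have "\<dots> = (N *\<^sub>v unit_vec c j) $ i" by (simp add: eq)
  also have "\<dots> = N $$ (i, j)" using M N i j by (simp add: row_def)
  finally show "M $$ (i, j) = N $$ (i, j)" .
qed (use M N in auto)

lemma inv_mat_of_injective:
  fixes M :: "complex mat"
  assumes M: "M \<in> carrier_mat k k"
    and inj: "\<And>z. z \<in> carrier_vec k \<Longrightarrow> M *\<^sub>v z = 0\<^sub>v k \<Longrightarrow> z = 0\<^sub>v k"
  shows "inv_mat k M \<in> carrier_mat k k" "inv_mat k M * M = 1\<^sub>m k" "M * inv_mat k M = 1\<^sub>m k"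
proof -
  have "det M \<noteq> 0"
    using det_0_iff_vec_prod_zero_field[OF M] inj by auto
  then obtain E where E: "E \<in> carrier_mat k k" "E * M = 1\<^sub>m k" "M * E = 1\<^sub>m k"
    using det_non_zero_imp_unit[OF M, of "()"] unfolding Units_def ring_mat_simps by auto
  have "E' = E" if "E' \<in> carrier_mat k k" "E' * M = 1\<^sub>m k" for E'
    using that E M by (metis assoc_mult_mat right_mult_one_mat)
  hence "inv_mat k M = E"
    unfolding inv_mat_def using E by blast
  with E show "inv_mat k M \<in> carrier_mat k k" "inv_mat k M * M = 1\<^sub>m k" "M * inv_mat k M = 1\<^sub>m k"
    by auto
qed

lemma V_carrier: "u \<in> V n \<Longrightarrow> u \<in> carrier_mat n n"
  unfolding V_def U_def by simp

lemma V_tail_fixed_imp_zero: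
  assumes u: "u \<in> V n" and mn: "m \<le> n" and w: "w \<in> carrier_vec m" and z: "z \<in> carrier_vec (n - m)"
    and uz: "u *\<^sub>v (0\<^sub>v m @\<^sub>v z) = w @\<^sub>v z"
  shows "w = 0\<^sub>v m" "z = 0\<^sub>v (n - m)"
proof -
  define x where "x = 0\<^sub>v m @\<^sub>v z"
  have x: "x \<in> carrier_vec n"
    unfolding x_def using z mn by (metis append_carrier_vec le_add_diff_inverse zero_carrier_vec)
  have "(w @\<^sub>v z) \<bullet>c (w @\<^sub>v z) = x \<bullet>c x"
    using U_cscalar_prod[of u n x x] u x uz unfolding V_def x_def by simp
  moreover have "(w @\<^sub>v z) \<bullet>c (w @\<^sub>v z) = w \<bullet>c w + z \<bullet>c z"
    using w z by (simp add: cscalar_prod_append)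
  moreover have "x \<bullet>c x = z \<bullet>c z"
    using z unfolding x_def by (simp add: cscalar_prod_append[of "0\<^sub>v m" m z "n - m"])
  ultimately have "w \<bullet>c w = 0"
    by simp
  thus w0: "w = 0\<^sub>v m"
    using w by simp
  have "\<not> eigenvector u x 1"
    using u unfolding V_def eigenvalue_def by auto
  moreover have "u *\<^sub>v x = 1 \<cdot>\<^sub>v x"
    using uz w0 x unfolding x_def by simp
  ultimately have "x = 0\<^sub>v n"
    using x V_carrier[OF u] unfolding eigenvector_def by simp
  hence "x = 0\<^sub>v m @\<^sub>v 0\<^sub>v (n - m)"
    using mn by (intro eq_vecI) auto
  thus "z = 0\<^sub>v (n - m)"
    unfolding x_def using append_vec_eq[of "0\<^sub>v m" m "0\<^sub>v m" z] by simp
qed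

lemma eq_add_of_minus_vec_eq:
  fixes a b c :: "'a :: ab_group_add vec"
  assumes a: "a \<in> carrier_vec n" and b: "b \<in> carrier_vec n" and eq: "a - b = c"
  shows "a = c + b"
proof (rule eq_vecI)
  fix i assume "i < dim_vec (c + b)"
  with arg_cong[of _ _ "\<lambda>v. v $ i", OF eq] a b show "a $ i = (c + b) $ i"
    by (simp add: diff_eq_eq)
qed (use a b eq in auto)

lemma append_vec_minus:
  fixes a c :: "'a :: group_add vec"
  assumes "a \<in> carrier_vec n1" "b \<in> carrier_vec n2" "c \<in> carrier_vec n1" "d \<in> carrier_vec n2"
  shows "(a @\<^sub>v b) - (c @\<^sub>v d) = (a - c) @\<^sub>v (b - d)"
  using assms by (intro eq_vecI) auto

lemma mult_mat_vec_zero: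
  "A \<in> carrier_mat nr nc \<Longrightarrow> A *\<^sub>v 0\<^sub>v nc = (0\<^sub>v nr :: 'a :: comm_ring vec)"
  by (intro eq_vecI) (auto simp: scalar_prod_def)

lemma embed_mat_carrier [simp]:
  "v \<in> carrier_mat m m \<Longrightarrow> m \<le> n \<Longrightarrow> embed_mat n m v \<in> carrier_mat n n"
  unfolding embed_mat_def by (metis four_block_carrier_mat le_add_diff_inverse one_carrier_mat)

lemma embed_mat_mult_append:
  assumes "v \<in> carrier_mat m m" "x \<in> carrier_vec m" "z \<in> carrier_vec (n - m)"
  shows "embed_mat n m v *\<^sub>v (x @\<^sub>v z) = (v *\<^sub>v x) @\<^sub>v z"
  unfolding embed_mat_def using assms by (simp add: mult_mat_vec_split)

locale V_blocks =
  fixes n m :: nat and u A B C D :: "complex mat"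
  assumes u_V: "u \<in> V n" and m_le_n: "m \<le> n" and split: "split_block u m m = (A, B, C, D)"
begin

abbreviation "k \<equiv> n - m"

lemma u_U: "u \<in> U n"
  using u_V unfolding V_def by simp

lemma u_carrier [simp]: "u \<in> carrier_mat n n"
  using V_carrier[OF u_V] .

lemma
  A_carrier [simp]: "A \<in> carrier_mat m m" and
  B_carrier [simp]: "B \<in> carrier_mat m k" and
  C_carrier [simp]: "C \<in> carrier_mat k m" and
  D_carrier [simp]: "D \<in> carrier_mat k k" and
  u_four_block: "u = four_block_mat A B C D"
  using split_block[OF split, of k k] u_carrier m_le_n by auto

lemmas block_mult_vec_simps [simp] =
  mult_mat_vec_carrier[OF A_carrier] mult_mat_vec_carrier[OF B_carrier]
  mult_mat_vec_carrier[OF C_carrier] mult_mat_vec_carrier[OF D_carrier]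
  mult_mat_vec_carrier[OF u_carrier]
  mult_mat_vec_zero[OF A_carrier] mult_mat_vec_zero[OF C_carrier]

lemma append_carrier [simp]: "x \<in> carrier_vec m \<Longrightarrow> z \<in> carrier_vec k \<Longrightarrow> x @\<^sub>v z \<in> carrier_vec n"
  using m_le_n by (metis append_carrier_vec le_add_diff_inverse)

lemma vec_split: "x \<in> carrier_vec n \<Longrightarrow> x = vec_first x m @\<^sub>v vec_last x k"
  using m_le_n by (metis le_add_diff_inverse vec_first_last_append)

lemma u_mult_four_block:
  "x \<in> carrier_vec m \<Longrightarrow> z \<in> carrier_vec k \<Longrightarrow>
    u *\<^sub>v (x @\<^sub>v z) = (A *\<^sub>v x + B *\<^sub>v z) @\<^sub>v (C *\<^sub>v x + D *\<^sub>v z)"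
  unfolding u_four_block by (rule four_block_mat_mult_vec[OF A_carrier B_carrier C_carrier D_carrier])

lemma one_minus_D_plus_D:
  assumes w: "w \<in> carrier_vec k"
  shows "(1\<^sub>m k - D) *\<^sub>v w + D *\<^sub>v w = w"
proof -
  have "(1\<^sub>m k - D) *\<^sub>v w + D *\<^sub>v w = ((1\<^sub>m k - D) + D) *\<^sub>v w"
    using add_mult_distrib_mat_vec[OF minus_carrier_mat[OF D_carrier] D_carrier w] by simp
  also have "(1\<^sub>m k - D) + D = 1\<^sub>m k"
    using carrier_matD[OF D_carrier] by (intro eq_matI) auto
  finally show ?thesis
    using w by simp
qed

lemma one_minus_D_injective:
  assumes z: "z \<in> carrier_vec k" and Dz: "(1\<^sub>m k - D) *\<^sub>v z = 0\<^sub>v k"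
  shows "z = 0\<^sub>v k"
proof -
  have "D *\<^sub>v z = z"
    using one_minus_D_plus_D[OF z] z unfolding Dz by simp
  hence "u *\<^sub>v (0\<^sub>v m @\<^sub>v z) = (B *\<^sub>v z) @\<^sub>v z"
    using z mult_mat_vec_carrier[OF B_carrier z] by (simp add: u_mult_four_block)
  thus ?thesis
    by (rule V_tail_fixed_imp_zero(2)[OF u_V m_le_n mult_mat_vec_carrier[OF B_carrier z] z])
qed

definition E :: "complex mat" where
  "E = inv_mat k (1\<^sub>m k - D)"

lemma E_carrier [simp]: "E \<in> carrier_mat k k"
  and one_minus_D_E: "(1\<^sub>m k - D) * E = 1\<^sub>m k"
  using inv_mat_of_injective[of "1\<^sub>m k - D" k] one_minus_D_injective minus_carrier_mat[OF D_carrier]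
  unfolding E_def by auto

lemmas E_mult_vec_carrier [simp] = mult_mat_vec_carrier[OF E_carrier]

definition P :: "complex mat" where
  "P = A + B * E * C"

lemma P_carrier [simp]: "P \<in> carrier_mat m m"
  unfolding P_def by (metis add_carrier_mat mult_carrier_mat B_carrier C_carrier E_carrier)

lemmas P_mult_vec_simps [simp] = mult_mat_vec_carrier[OF P_carrier] mult_mat_vec_zero[OF P_carrier]

lemma BEC_carrier [simp]: "B * E * C \<in> carrier_mat m m"
  using mult_carrier_mat[OF mult_carrier_mat[OF B_carrier E_carrier] C_carrier] .

lemma pi_tilde_eq_P: "pi_tilde n m u = P"
  unfolding pi_tilde_def split P_def E_def by simp

definition graph_tail :: "complex vec \<Rightarrow> complex vec" where
  "graph_tail x = E *\<^sub>v (C *\<^sub>v x)"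

lemma graph_tail_carrier [simp]: "x \<in> carrier_vec m \<Longrightarrow> graph_tail x \<in> carrier_vec k"
  unfolding graph_tail_def by simp

lemma u_mult_graph:
  assumes x: "x \<in> carrier_vec m"
  shows "u *\<^sub>v (x @\<^sub>v graph_tail x) = (P *\<^sub>v x) @\<^sub>v graph_tail x"
proof -
  let ?c = "C *\<^sub>v x" and ?e = "graph_tail x"
  have c: "?c \<in> carrier_vec k"
    using x by simp
  have "(1\<^sub>m k - D) *\<^sub>v ?e = ((1\<^sub>m k - D) * E) *\<^sub>v ?c"
    unfolding graph_tail_def using assoc_mult_mat_vec[of "1\<^sub>m k - D" k k E k ?c] c
    by (simp add: minus_carrier_mat)
  also have "\<dots> = ?c"
    using c by (simp add: one_minus_D_E)
  finally have tail: "?c + D *\<^sub>v ?e = ?e"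
    using one_minus_D_plus_D[OF graph_tail_carrier[OF x]] by simp
  have "P *\<^sub>v x = A *\<^sub>v x + (B * E * C) *\<^sub>v x"
    unfolding P_def using add_mult_distrib_mat_vec[OF A_carrier BEC_carrier x] .
  also have "(B * E * C) *\<^sub>v x = B *\<^sub>v ?e"
    unfolding graph_tail_def
    using assoc_mult_mat_vec[OF mult_carrier_mat[OF B_carrier E_carrier] C_carrier x]
      assoc_mult_mat_vec[OF B_carrier E_carrier c] by simp
  finally have head: "A *\<^sub>v x + B *\<^sub>v ?e = P *\<^sub>v x" ..
  show ?thesis
    using x by (simp add: u_mult_four_block head tail)
qed

lemma P_cscalar_prod:
  assumes x: "x \<in> carrier_vec m" and y: "y \<in> carrier_vec m"
  shows "(P *\<^sub>v x) \<bullet>c (P *\<^sub>v y) = x \<bullet>c y"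
proof -
  have "(u *\<^sub>v (x @\<^sub>v graph_tail x)) \<bullet>c (u *\<^sub>v (y @\<^sub>v graph_tail y))
      = (x @\<^sub>v graph_tail x) \<bullet>c (y @\<^sub>v graph_tail y)"
    by (rule U_cscalar_prod[OF u_U]) (simp_all add: x y)
  hence "(P *\<^sub>v x) \<bullet>c (P *\<^sub>v y) + graph_tail x \<bullet>c graph_tail y
      = x \<bullet>c y + graph_tail x \<bullet>c graph_tail y"
    unfolding u_mult_graph[OF x] u_mult_graph[OF y]
    by (simp add: x y cscalar_prod_append[of _ m _ k])
  thus ?thesis
    by simp
qed

lemma P_U: "P \<in> U m"
  by (rule cscalar_prod_preserving_in_U[OF P_carrier P_cscalar_prod])

lemma pi_cond_P: "pi_cond n m u P"
  unfolding pi_cond_def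
proof
  fix x :: "complex vec" assume x: "x \<in> carrier_vec n"
  define x1 x2 where "x1 = vec_first x m" and "x2 = vec_last x k"
  have x1: "x1 \<in> carrier_vec m" and x2: "x2 \<in> carrier_vec k" and x_split: "x = x1 @\<^sub>v x2"
    unfolding x1_def x2_def using vec_split[OF x] by simp_all
  define e where "e = graph_tail x1"
  have e: "e \<in> carrier_vec k"
    unfolding e_def using x1 by simp
  define y where "y = 0\<^sub>v m @\<^sub>v (x2 - e)"
  have y: "y \<in> carrier_vec n"
    unfolding y_def using x2 e by simp
  have "e + (x2 - e) = x2"
    using e x2 by (intro eq_vecI) auto
  hence x_decomp: "x = (x1 @\<^sub>v e) + y"
    unfolding x_split y_def using x1 x2 e by (simp add: append_vec_add)
  have EP: "embed_mat n m P \<in> carrier_mat n n"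
    using m_le_n by simp
  have "(u - embed_mat n m P) *\<^sub>v x
      = (u - embed_mat n m P) *\<^sub>v (x1 @\<^sub>v e) + (u - embed_mat n m P) *\<^sub>v y"
    unfolding x_decomp
    by (rule mult_add_distrib_mat_vec[OF minus_carrier_mat[OF EP]]) (simp_all add: x1 e y)
  also have "(u - embed_mat n m P) *\<^sub>v (x1 @\<^sub>v e) = 0\<^sub>v n"
    using minus_mult_distrib_mat_vec[OF u_carrier EP, of "x1 @\<^sub>v e"] x1 e
    by (simp add: e_def u_mult_graph embed_mat_mult_append)
  also have "(u - embed_mat n m P) *\<^sub>v y = u *\<^sub>v y - y"
    using minus_mult_distrib_mat_vec[OF u_carrier EP y] x2 e
    by (simp add: y_def embed_mat_mult_append)
  also have "\<dots> = (u - 1\<^sub>m n) *\<^sub>v y"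
    using minus_mult_distrib_mat_vec[OF u_carrier one_carrier_mat y] y by simp
  finally have "(u - embed_mat n m P) *\<^sub>v x = (u - 1\<^sub>m n) *\<^sub>v y"
    using mult_mat_vec_carrier[OF minus_carrier_mat[OF one_carrier_mat, of u] y] by simp
  moreover have "\<forall>i<m. y $ i = 0"
    unfolding y_def using x2 e by simp
  ultimately show "\<exists>y\<in>carrier_vec n. (\<forall>i<m. y $ i = 0) \<and> (u - embed_mat n m P) *\<^sub>v x = (u - 1\<^sub>m n) *\<^sub>v y"
    using y by blast
qed

lemma pi_cond_imp_eq_P:
  assumes v: "v \<in> carrier_mat m m" and cond: "pi_cond n m u v"
  shows "v = P"
proof (rule mat_eq_by_mult_vec[OF v P_carrier])
  fix x :: "complex vec" assume x: "x \<in> carrier_vec m"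
  define e where "e = graph_tail x"
  have e: "e \<in> carrier_vec k"
    unfolding e_def using x by simp
  have vx: "v *\<^sub>v x \<in> carrier_vec m"
    using v x by simp
  obtain y where y: "y \<in> carrier_vec n" and y_head: "\<forall>i<m. y $ i = 0"
    and eq: "(u - embed_mat n m v) *\<^sub>v (x @\<^sub>v e) = (u - 1\<^sub>m n) *\<^sub>v y"
    using cond x e unfolding pi_cond_def by (meson append_carrier)
  define z where "z = vec_last y k"
  have z: "z \<in> carrier_vec k"
    unfolding z_def by simp
  have "vec_first y m = 0\<^sub>v m"
    using y_head unfolding vec_first_def by (intro eq_vecI) auto
  hence y_split: "y = 0\<^sub>v m @\<^sub>v z"
    using vec_split[OF y] unfolding z_def by simp
  define w where "w = u *\<^sub>v y"
  have w: "w \<in> carrier_vec n"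
    unfolding w_def using y by simp
  have "w - y = (u - embed_mat n m v) *\<^sub>v (x @\<^sub>v e)"
    using eq minus_mult_distrib_mat_vec[OF u_carrier one_carrier_mat y] y unfolding w_def by simp
  also have "\<dots> = ((P *\<^sub>v x) @\<^sub>v e) - ((v *\<^sub>v x) @\<^sub>v e)"
    using minus_mult_distrib_mat_vec[OF u_carrier embed_mat_carrier[OF v m_le_n], of "x @\<^sub>v e"] x e
    by (simp add: e_def u_mult_graph embed_mat_mult_append[OF v])
  also have "\<dots> = (P *\<^sub>v x - v *\<^sub>v x) @\<^sub>v 0\<^sub>v k"
    using x e vx by (simp add: append_vec_minus[of "P *\<^sub>v x" m e k "v *\<^sub>v x" e])
  finally have "w = ((P *\<^sub>v x - v *\<^sub>v x) @\<^sub>v 0\<^sub>v k) + (0\<^sub>v m @\<^sub>v z)"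
    using eq_add_of_minus_vec_eq[OF w y] unfolding y_split by simp
  hence "u *\<^sub>v (0\<^sub>v m @\<^sub>v z) = (P *\<^sub>v x - v *\<^sub>v x) @\<^sub>v z"
    using x vx z unfolding w_def y_split
    by (simp add: append_vec_add[of "P *\<^sub>v x - v *\<^sub>v x" m "0\<^sub>v m" "0\<^sub>v k" k z])
  hence "P *\<^sub>v x - v *\<^sub>v x = 0\<^sub>v m"
    using V_tail_fixed_imp_zero(1)[OF u_V m_le_n _ z] x vx by simp
  thus "v *\<^sub>v x = P *\<^sub>v x"
    using eq_add_of_minus_vec_eq[of "P *\<^sub>v x" m "v *\<^sub>v x"] x vx by simp
qed

end

lemma V_blocks_exist:
  assumes "u \<in> V n" "m \<le> n"
  obtains A B C D where "V_blocks n m u A B C D"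
proof -
  obtain A B C D where "split_block u m m = (A, B, C, D)"
    by (metis prod_cases4)
  with assms show thesis
    by (intro that V_blocks.intro)
qed

lemma pi_cond_iff_pi_tilde:
  assumes u: "u \<in> V n" and mn: "m \<le> n" and v: "v \<in> carrier_mat m m"
  shows "pi_cond n m u v \<longleftrightarrow> v = pi_tilde n m u"
proof -
  obtain A B C D where "V_blocks n m u A B C D"
    using V_blocks_exist[OF u mn] .
  then interpret V_blocks n m u A B C D .
  show ?thesis
    using pi_cond_P pi_cond_imp_eq_P[OF v] pi_tilde_eq_P by auto
qed

lemma pi_proj_eq_pi_tilde:
  assumes u: "u \<in> V n" and mn: "m \<le> n"
  shows "pi_proj n m u = pi_tilde n m u"
proof -
  obtain A B C D where "V_blocks n m u A B C D"
    using V_blocks_exist[OF u mn] .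
  then interpret V_blocks n m u A B C D .
  show ?thesis
    unfolding pi_proj_def pi_tilde_eq_P
    using P_U pi_cond_P pi_cond_imp_eq_P U_carrier by (intro the_equality) auto
qed

lemma embed_mat_self: "v \<in> carrier_mat m m \<Longrightarrow> embed_mat m m v = v"
  unfolding embed_mat_def by (intro eq_matI) auto

lemma embed_mat_embed_mat:
  "w \<in> carrier_mat m m \<Longrightarrow> m \<le> k \<Longrightarrow> k \<le> n \<Longrightarrow> embed_mat n k (embed_mat k m w) = embed_mat n m w"
  unfolding embed_mat_def by (intro eq_matI) auto

lemma pi_cond_refl:
  assumes w: "w \<in> carrier_mat m m"
  shows "pi_cond m m w w"
  unfolding pi_cond_def embed_mat_self[OF w]
proof (intro ballI bexI conjI)
  fix x :: "complex vec" assume x: "x \<in> carrier_vec m"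
  show "(w - w) *\<^sub>v x = (w - 1\<^sub>m m) *\<^sub>v 0\<^sub>v m"
    using minus_mult_distrib_mat_vec[OF w w x] mult_mat_vec_zero[OF minus_carrier_mat[OF one_carrier_mat, of w]] w x
    by simp
qed auto

lemma pi_cond_embed_mat:
  fixes v w :: "complex mat"
  assumes v: "v \<in> carrier_mat k k" and w: "w \<in> carrier_mat m m"
    and mk: "m \<le> k" and kn: "k \<le> n" and vw: "pi_cond k m v w"
  shows "pi_cond n m (embed_mat n k v) w"
  unfolding pi_cond_def
proof
  fix x :: "complex vec" assume x: "x \<in> carrier_vec n"
  define x1 x2 where "x1 = vec_first x k" and "x2 = vec_last x (n - k)"
  have x1: "x1 \<in> carrier_vec k" and x2: "x2 \<in> carrier_vec (n - k)"
    unfolding x1_def x2_def by simp_all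
  have x_split: "x = x1 @\<^sub>v x2"
    unfolding x1_def x2_def using x kn by (metis le_add_diff_inverse vec_first_last_append)
  obtain z where z: "z \<in> carrier_vec k" and z_head: "\<forall>i<m. z $ i = 0"
    and z_eq: "(v - embed_mat k m w) *\<^sub>v x1 = (v - 1\<^sub>m k) *\<^sub>v z"
    using vw x1 unfolding pi_cond_def by blast
  define z' where "z' = z @\<^sub>v 0\<^sub>v (n - k)"
  have z': "z' \<in> carrier_vec n"
    unfolding z'_def using z kn by (metis append_carrier_vec le_add_diff_inverse zero_carrier_vec)
  define V where "V = embed_mat n k v"
  have V: "V \<in> carrier_mat n n" and W: "embed_mat n m w \<in> carrier_mat n n"
    and Ew: "embed_mat k m w \<in> carrier_mat k k"
    unfolding V_def using v w mk kn by simp_all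
  have "(V - embed_mat n m w) *\<^sub>v x = (v *\<^sub>v x1 - embed_mat k m w *\<^sub>v x1) @\<^sub>v 0\<^sub>v (n - k)"
    using minus_mult_distrib_mat_vec[OF V W x] x1 x2 v Ew
      append_vec_minus[of "v *\<^sub>v x1" k x2 "n - k" "embed_mat k m w *\<^sub>v x1" x2]
    unfolding V_def x_split embed_mat_embed_mat[OF w mk kn, symmetric]
    by (simp add: embed_mat_mult_append)
  also have "v *\<^sub>v x1 - embed_mat k m w *\<^sub>v x1 = v *\<^sub>v z - z"
    using z_eq minus_mult_distrib_mat_vec[OF v Ew x1] minus_mult_distrib_mat_vec[OF v one_carrier_mat z] z
    by simp
  also have "(v *\<^sub>v z - z) @\<^sub>v 0\<^sub>v (n - k) = (V - 1\<^sub>m n) *\<^sub>v z'"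
    using minus_mult_distrib_mat_vec[OF V one_carrier_mat z'] z v z'
      append_vec_minus[of "v *\<^sub>v z" k "0\<^sub>v (n - k)" "n - k" z "0\<^sub>v (n - k)"]
    unfolding V_def by (simp add: z'_def embed_mat_mult_append)
  finally have "(V - embed_mat n m w) *\<^sub>v x = (V - 1\<^sub>m n) *\<^sub>v z'" .
  moreover have "\<forall>i<m. z' $ i = 0"
    unfolding z'_def using z z_head mk by simp
  ultimately show "\<exists>y\<in>carrier_vec n. (\<forall>i<m. y $ i = 0)
      \<and> (V - embed_mat n m w) *\<^sub>v x = (V - 1\<^sub>m n) *\<^sub>v y"
    using z' by blast
qed

lemma pi_cond_trans:
  fixes u v w :: "complex mat"
  assumes u: "u \<in> carrier_mat n n" and v: "v \<in> carrier_mat k k" and w: "w \<in> carrier_mat m m"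
    and mk: "m \<le> k" and kn: "k \<le> n" and uv: "pi_cond n k u v" and vw: "pi_cond k m v w"
  shows "pi_cond n m u w"
  unfolding pi_cond_def
proof
  fix x :: "complex vec" assume x: "x \<in> carrier_vec n"
  define V W where "V = embed_mat n k v" and "W = embed_mat n m w"
  txt \<open>The witness for \<open>w\<close> is \<open>y + z - y'\<close>, where \<open>y'\<close> is the witness for \<open>z\<close> itself.\<close>
  obtain z where z: "z \<in> carrier_vec n" and z_head: "\<forall>i<m. z $ i = 0"
    and VW: "(V - W) *\<^sub>v x = (V - 1\<^sub>m n) *\<^sub>v z"
    using pi_cond_embed_mat[OF v w mk kn vw] x unfolding pi_cond_def V_def W_def by blast
  obtain y where y: "y \<in> carrier_vec n" and y_head: "\<forall>i<k. y $ i = 0"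
    and uVx: "(u - V) *\<^sub>v x = (u - 1\<^sub>m n) *\<^sub>v y"
    using uv x unfolding pi_cond_def V_def by blast
  obtain y' where y': "y' \<in> carrier_vec n" and y'_head: "\<forall>i<k. y' $ i = 0"
    and uVz: "(u - V) *\<^sub>v z = (u - 1\<^sub>m n) *\<^sub>v y'"
    using uv z unfolding pi_cond_def V_def by blast
  have V: "V \<in> carrier_mat n n" and W: "W \<in> carrier_mat n n"
    unfolding V_def W_def using v w mk kn by simp_all
  have uV: "u - V \<in> carrier_mat n n" and VW_carrier: "V - W \<in> carrier_mat n n"
    and u1: "u - 1\<^sub>m n \<in> carrier_mat n n"
    using u V W by (simp_all add: minus_carrier_mat)
  have "u - W = (u - V) + (V - W)"
    using u V W by (intro eq_matI) auto
  moreover have "V - 1\<^sub>m n = (u - 1\<^sub>m n) - (u - V)"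
    using u V by (intro eq_matI) auto
  ultimately have "(u - W) *\<^sub>v x = (u - V) *\<^sub>v x + ((u - 1\<^sub>m n) *\<^sub>v z - (u - V) *\<^sub>v z)"
    using add_mult_distrib_mat_vec[OF uV VW_carrier x] minus_mult_distrib_mat_vec[OF u1 uV z] VW by simp
  also have "\<dots> = (u - 1\<^sub>m n) *\<^sub>v (y + (z - y'))"
    unfolding uVx uVz using mult_add_distrib_mat_vec[OF u1 y, of "z - y'"]
      mult_minus_distrib_mat_vec[OF u1 z y'] y y' z by simp
  finally have "(u - W) *\<^sub>v x = (u - 1\<^sub>m n) *\<^sub>v (y + (z - y'))" .
  moreover have "\<forall>i<m. (y + (z - y')) $ i = 0"
  proof (intro allI impI)
    fix i assume "i < m"
    with mk kn have "i < k" and "i < n"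
      by simp_all
    with \<open>i < m\<close> show "(y + (z - y')) $ i = 0"
      using y y' z y_head y'_head z_head by simp
  qed
  ultimately show "\<exists>y\<in>carrier_vec n. (\<forall>i<m. y $ i = 0) \<and> (u - W) *\<^sub>v x = (u - 1\<^sub>m n) *\<^sub>v y"
    using y y' z by (intro bexI[of _ "y + (z - y')"] conjI) simp_all
qed

lemma pi_cond_all_iff_consecutive:
  assumes carrier: "\<And>n. 1 \<le> n \<Longrightarrow> u n \<in> carrier_mat n n"
  shows "(\<forall>n m. 1 \<le> m \<longrightarrow> m \<le> n \<longrightarrow> pi_cond n m (u n) (u m))
    \<longleftrightarrow> (\<forall>n\<ge>1. pi_cond (Suc n) n (u (Suc n)) (u n))"
proof
  assume "\<forall>n m. 1 \<le> m \<longrightarrow> m \<le> n \<longrightarrow> pi_cond n m (u n) (u m)"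
  thus "\<forall>n\<ge>1. pi_cond (Suc n) n (u (Suc n)) (u n)"
    by simp
next
  assume consecutive: "\<forall>n\<ge>1. pi_cond (Suc n) n (u (Suc n)) (u n)"
  have "pi_cond n m (u n) (u m)" if m: "1 \<le> m" and mn: "m \<le> n" for n m
    using mn
  proof (induction n rule: dec_induct)
    case base
    show ?case
      using pi_cond_refl[OF carrier[OF m]] .
  next
    case (step n)
    hence n: "1 \<le> n"
      using m by simp
    show ?case
      by (rule pi_cond_trans[OF carrier carrier carrier[OF m] step.hyps(1) _ _ step.IH])
        (use n consecutive in simp_all)
  qed
  thus "\<forall>n m. 1 \<le> m \<longrightarrow> m \<le> n \<longrightarrow> pi_cond n m (u n) (u m)"
    by blast
qed

theorem proposition2p4:
  fixes u :: "nat \<Rightarrow> complex mat"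
  assumes "\<forall>n\<ge>1. u n \<in> V n"
  shows "virtual_rotation u \<longleftrightarrow> virtual_isometry u"
proof -
  have V: "u n \<in> V n" if "1 \<le> n" for n
    using assms that by blast
  have pi_cond_iff: "pi_cond n m (u n) (u m) \<longleftrightarrow> u m = pi_tilde n m (u n)" if "1 \<le> m" "m \<le> n" for n m
    using pi_cond_iff_pi_tilde[OF V _ V_carrier[OF V[OF \<open>1 \<le> m\<close>]]] that by simp
  have proj_iff: "pi_proj (Suc n) n (u (Suc n)) = u n \<longleftrightarrow> pi_cond (Suc n) n (u (Suc n)) (u n)"
    if "1 \<le> n" for n
    using pi_proj_eq_pi_tilde[OF V[of "Suc n"]] pi_cond_iff[of n "Suc n"] that by auto
  have U: "u n \<in> U n" if "1 \<le> n" for n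
    using V[OF that] unfolding V_def by simp
  have "virtual_rotation u \<longleftrightarrow> (\<forall>n m. 1 \<le> m \<longrightarrow> m \<le> n \<longrightarrow> pi_cond n m (u n) (u m))"
    using assms by (simp add: virtual_rotation_def pi_cond_iff)
  also have "\<dots> \<longleftrightarrow> (\<forall>n\<ge>1. pi_cond (Suc n) n (u (Suc n)) (u n))"
    by (rule pi_cond_all_iff_consecutive[OF V_carrier[OF V]])
  also have "\<dots> \<longleftrightarrow> virtual_isometry u"
    unfolding virtual_isometry_def using U proj_iff by simp
  finally show ?thesis .
qed

end
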